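(* Let $\alpha\in[0,1)$, $\beta>0$, and $h(p)=g_\alpha(1-e^{-\beta p})$ for $p\in[0,1]$. (i) (Extinction) If $(1-\alpha)\beta\le1$, then $\lim_{k\to\infty}h^k(p)=0$ for all $p\in[0,1]$. (ii) (Survival) If $(1-\alpha)\beta>1$, then $\liminf_{k\to\infty}h^k(p)>0$ for all $p\in(0,1)$.
   Context: For $\alpha\in(0,1)$ let $g_\alpha(x)=\frac{(1-\sqrt{1-4(1-\alpha)x(1-x)})^3}{8(1-\alpha)^2x^2}$ for $x\in(0,1]$ and $g_\alpha(0)=0$; let $g_0(x)=x$ for $x\le1/2$ and $g_0(x)=(1-x)^3/x^2$ for $x>1/2$. $h^k$ denotes the $k$-th iterate of $h$. *)

theory Defs
  imports "HOL-Analysis.Analysis"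
begin

definition g :: "real \<Rightarrow> real \<Rightarrow> real" where
  "g \<alpha> x =
     (if \<alpha> = 0 then (if x \<le> 1/2 then x else (1 - x)^3 / x^2)
      else if x = 0 then 0
      else (1 - sqrt (1 - 4 * (1 - \<alpha>) * x * (1 - x)))^3 / (8 * (1 - \<alpha>)^2 * x^2))"

definition h :: "real \<Rightarrow> real \<Rightarrow> real \<Rightarrow> real" where
  "h \<alpha> \<beta> p = g \<alpha> (1 - exp (- \<beta> * p))"

end

theory Submission
  imports Defs
begin

text \<open>On [0,1] the function g_\<alpha> is squeezed between (1-\<alpha>) x (1-x)^3 and (1-\<alpha>) x, so with
e = exp(-\<beta> p) the map h lies between (1-\<alpha>)(1-e) e^3 and (1-\<alpha>)(1-e). If (1-\<alpha>)\<beta> \<le> 1, the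
upper bound lies strictly below the diagonal for p > 0, so every orbit decreases to a fixed
point of the upper bound, which can only be 0. If (1-\<alpha>)\<beta> > 1, the lower bound has slope
(1-\<alpha>)\<beta> > 1 at 0 and so exceeds the diagonal near 0; with a uniform positive bound away from 0
this gives h q \<ge> min q \<delta> on (0,1), which keeps the orbit of p above min p \<delta>.\<close>

lemma one_minus_sqrt_bounds:
  fixes c x :: real
  assumes "0 < c" "c \<le> 1" "0 \<le> x" "x \<le> 1"
  shows "2*c*x*(1-x) \<le> 1 - sqrt (1 - 4*c*x*(1-x))"
    and "1 - sqrt (1 - 4*c*x*(1-x)) \<le> 2*c*x"
proof -
  have "x*(1-x) \<le> 1/4"
    using zero_le_power2[of "2*x-1"] by (simp add: power2_eq_square algebra_simps)
  moreover have "c*(x*(1-x)) \<le> x*(1-x)"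
    using assms by (intro mult_left_le_one_le) auto
  ultimately have "0 \<le> 1 - 2*c*x*(1-x)" by (simp add: algebra_simps)
  moreover have "1 - 4*c*x*(1-x) \<le> (1 - 2*c*x*(1-x))\<^sup>2"
    using zero_le_power2[of "2*c*x*(1-x)"] by (simp add: power2_eq_square algebra_simps)
  ultimately have "sqrt (1 - 4*c*x*(1-x)) \<le> 1 - 2*c*x*(1-x)"
    by (rule real_le_lsqrt)
  then show "2*c*x*(1-x) \<le> 1 - sqrt (1 - 4*c*x*(1-x))" by simp
  have "c*x\<^sup>2 \<le> x\<^sup>2" using assms by (intro mult_left_le_one_le) auto
  then have "(1 - 2*c*x)\<^sup>2 \<le> 1 - 4*c*x*(1-x)"
    using assms by (simp add: power2_eq_square algebra_simps mult_left_mono)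
  then have "1 - 2*c*x \<le> sqrt (1 - 4*c*x*(1-x))" by (rule real_le_rsqrt)
  then show "1 - sqrt (1 - 4*c*x*(1-x)) \<le> 2*c*x" by simp
qed

lemma g_zero_bounds:
  fixes x :: real
  assumes "0 \<le> x" "x \<le> 1"
  shows "x*(1-x)^3 \<le> g 0 x" and "g 0 x \<le> x"
proof -
  have "x*(1-x)^3 \<le> x" "x^3*(1-x)^3 \<le> (1-x)^3"
    using assms by (auto intro!: mult_right_le_one_le mult_left_le_one_le simp: power_le_one)
  moreover have "(1-x)^3 \<le> x^3" if "1/2 < x" using that assms by (intro power_mono) auto
  ultimately show "x*(1-x)^3 \<le> g 0 x" and "g 0 x \<le> x"
    using assms by (auto simp: g_def field_simps power3_eq_cube power2_eq_square)
qed

lemma g_pos_bounds: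
  fixes \<alpha> x :: real
  assumes "0 < \<alpha>" "\<alpha> < 1" "0 < x" "x \<le> 1"
  shows "(1-\<alpha>)*x*(1-x)^3 \<le> g \<alpha> x" and "g \<alpha> x \<le> (1-\<alpha>)*x"
proof -
  define c where "c = 1 - \<alpha>"
  define s where "s = sqrt (1 - 4*c*x*(1-x))"
  have c: "0 < c" "c \<le> 1" using assms by (auto simp: c_def)
  have g_eq: "g \<alpha> x = (1-s)^3 / (8*c^2*x^2)"
    using assms by (simp add: g_def s_def c_def mult_ac)
  have den: "0 < 8*c^2*x^2" using c assms by simp
  note s_bounds = one_minus_sqrt_bounds[OF c less_imp_le[OF \<open>0 < x\<close>] \<open>x \<le> 1\<close>, folded s_def]
  have "0 \<le> 2*c*x*(1-x)" using c assms by simp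
  then have "(2*c*x*(1-x))^3 \<le> (1-s)^3" "(1-s)^3 \<le> (2*c*x)^3"
    using s_bounds by (auto intro: power_mono)
  moreover have "(2*c*x*(1-x))^3 = c*x*(1-x)^3 * (8*c^2*x^2)" "(2*c*x)^3 = c*x * (8*c^2*x^2)"
    by (simp_all add: power3_eq_cube power2_eq_square)
  ultimately show "(1-\<alpha>)*x*(1-x)^3 \<le> g \<alpha> x" "g \<alpha> x \<le> (1-\<alpha>)*x"
    using den unfolding g_eq c_def[symmetric] by (simp_all add: pos_le_divide_eq pos_divide_le_eq)
qed

lemma g_bounds:
  fixes \<alpha> x :: real
  assumes "0 \<le> \<alpha>" "\<alpha> < 1" "0 \<le> x" "x \<le> 1"
  shows "(1-\<alpha>)*x*(1-x)^3 \<le> g \<alpha> x" and "g \<alpha> x \<le> (1-\<alpha>)*x"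
  using assms g_zero_bounds[of x] g_pos_bounds[of \<alpha> x]
  by (cases "\<alpha> = 0"; cases "x = 0"; simp add: g_def)+

lemma h_bounds:
  fixes \<alpha> \<beta> p :: real
  assumes "0 \<le> \<alpha>" "\<alpha> < 1" "0 \<le> \<beta>" "0 \<le> p"
  shows "(1-\<alpha>)*(1 - exp (-\<beta>*p))*exp (-\<beta>*p)^3 \<le> h \<alpha> \<beta> p"
    and "h \<alpha> \<beta> p \<le> (1-\<alpha>)*(1 - exp (-\<beta>*p))"
proof -
  have "0 \<le> 1 - exp (-\<beta>*p)" "1 - exp (-\<beta>*p) \<le> 1" using assms by simp_all
  from g_bounds[OF assms(1,2) this] show
    "(1-\<alpha>)*(1 - exp (-\<beta>*p))*exp (-\<beta>*p)^3 \<le> h \<alpha> \<beta> p"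
    "h \<alpha> \<beta> p \<le> (1-\<alpha>)*(1 - exp (-\<beta>*p))"
    by (simp_all add: h_def)
qed

lemma one_minus_exp_neg_less:
  fixes y :: real
  assumes "0 < y"
  shows "1 - exp (-y) < y"
proof (cases "y \<le> 2")
  case True
  have "(1 - y/2)^2 \<le> exp (-(y/2))^2"
    using True exp_ge_add_one_self[of "-(y/2)"] by (intro power_mono) auto
  also have "\<dots> = exp (-y)" by (simp add: power2_eq_square flip: exp_add)
  finally have "(1 - y/2)^2 \<le> exp (-y)" .
  moreover have "1 - y < (1 - y/2)^2" using assms by (simp add: power2_eq_square algebra_simps)
  ultimately show ?thesis by linarith
next
  case False
  then show ?thesis using exp_gt_zero[of "-y"] by linarith
qed

lemma iterates_tendsto_zero:
  fixes T F :: "real \<Rightarrow> real"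
  assumes T_nonneg: "\<And>q. 0 \<le> q \<Longrightarrow> 0 \<le> T q"
    and T_le: "\<And>q. 0 \<le> q \<Longrightarrow> T q \<le> F q"
    and F_cont: "\<And>q. isCont F q"
    and F_less: "\<And>q. 0 < q \<Longrightarrow> F q < q"
    and "0 \<le> p"
  shows "(\<lambda>k. (T ^^ k) p) \<longlonglongrightarrow> 0"
proof -
  define X where "X k = (T ^^ k) p" for k
  have X_Suc: "X (Suc k) = T (X k)" for k by (simp add: X_def)
  have X_nonneg: "0 \<le> X k" for k
    by (induction k) (use \<open>0 \<le> p\<close> T_nonneg X_Suc in \<open>auto simp: X_def\<close>)
  have "(\<lambda>n. F (inverse (real (Suc n)))) \<longlonglongrightarrow> F 0"
    by (rule isCont_tendsto_compose[OF F_cont LIMSEQ_inverse_real_of_nat])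
  then have "F 0 \<le> 0"
    using LIMSEQ_inverse_real_of_nat by (intro LIMSEQ_le) (auto intro!: less_imp_le[OF F_less])
  then have F_le: "F q \<le> q" if "0 \<le> q" for q
    using F_less[of q] that by (cases "q = 0") auto
  have "decseq X"
    unfolding decseq_Suc_iff using X_Suc T_le F_le X_nonneg by (metis order_trans)
  then obtain L where L: "X \<longlonglongrightarrow> L"
    using decseq_convergent[of X 0] X_nonneg by blast
  have "0 \<le> L" using L X_nonneg by (intro LIMSEQ_le_const) auto
  have "(\<lambda>k. X (Suc k)) \<longlonglongrightarrow> L" using L by (rule LIMSEQ_Suc)
  moreover have "(\<lambda>k. F (X k)) \<longlonglongrightarrow> F L" using L by (rule isCont_tendsto_compose[OF F_cont])
  ultimately have "L \<le> F L" using X_Suc T_le X_nonneg by (intro LIMSEQ_le) auto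
  with \<open>0 \<le> L\<close> F_less[of L] have "L = 0" by linarith
  with L show ?thesis unfolding X_def by simp
qed

lemma liminf_iterates_pos:
  fixes T :: "real \<Rightarrow> real"
  assumes T_into: "\<And>q. q \<in> S \<Longrightarrow> T q \<in> S"
    and T_ge: "\<And>q. q \<in> S \<Longrightarrow> min q \<delta> \<le> T q"
    and "0 < \<delta>" "p \<in> S" "0 < p"
  shows "0 < liminf (\<lambda>k. ereal ((T ^^ k) p))"
proof -
  have "(T ^^ k) p \<in> S \<and> min p \<delta> \<le> (T ^^ k) p" for k
  proof (induction k)
    case 0
    then show ?case using \<open>p \<in> S\<close> by simp
  next
    case (Suc k)
    then show ?case using T_into T_ge[of "(T ^^ k) p"] by auto
  qed
  then have "ereal (min p \<delta>) \<le> liminf (\<lambda>k. ereal ((T ^^ k) p))"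
    by (intro Liminf_bounded always_eventually allI) (simp only: ereal_less_eq(3))
  moreover have "0 < ereal (min p \<delta>)" using assms by simp
  ultimately show ?thesis by (rule order_less_le_trans[rotated])
qed

lemma above_diagonal_near_zero:
  fixes F :: "real \<Rightarrow> real"
  assumes "(F has_real_derivative D) (at 0)" "1 < D" "F 0 = 0"
  obtains d where "0 < d" "\<And>q. 0 < q \<Longrightarrow> q < d \<Longrightarrow> q < F q"
proof -
  have "((\<lambda>q. F q - q) has_real_derivative D - 1) (at 0)"
    using assms(1) DERIV_ident by (rule DERIV_diff)
  moreover have "0 < D - 1" using assms(2) by simp
  ultimately obtain d where "0 < d" "\<forall>q>0. q < d \<longrightarrow> F 0 - 0 < F (0 + q) - (0 + q)"
    by (blast dest: DERIV_pos_inc_right)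
  with assms(3) that show ?thesis by auto
qed

lemma h_nonneg:
  fixes \<alpha> \<beta> p :: real
  assumes "0 \<le> \<alpha>" "\<alpha> < 1" "0 \<le> \<beta>" "0 \<le> p"
  shows "0 \<le> h \<alpha> \<beta> p"
proof -
  have "0 \<le> (1-\<alpha>)*(1 - exp (-\<beta>*p))*exp (-\<beta>*p)^3" using assms by simp
  with h_bounds(1)[OF assms] show ?thesis by linarith
qed

lemma h_in_unit_interval:
  fixes \<alpha> \<beta> q :: real
  assumes "0 \<le> \<alpha>" "\<alpha> < 1" "0 < \<beta>" "0 < q"
  shows "0 < h \<alpha> \<beta> q" and "h \<alpha> \<beta> q < 1"
proof -
  have "0 < (1-\<alpha>)*(1 - exp (-\<beta>*q))*exp (-\<beta>*q)^3" using assms by simp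
  moreover have "(1-\<alpha>)*(1 - exp (-\<beta>*q))*exp (-\<beta>*q)^3 \<le> h \<alpha> \<beta> q"
    using assms by (intro h_bounds) auto
  ultimately show "0 < h \<alpha> \<beta> q" by linarith
  have "(1-\<alpha>)*(1 - exp (-\<beta>*q)) \<le> 1 - exp (-\<beta>*q)"
    using assms by (intro mult_left_le_one_le) auto
  moreover have "h \<alpha> \<beta> q \<le> (1-\<alpha>)*(1 - exp (-\<beta>*q))"
    using assms by (intro h_bounds) auto
  ultimately show "h \<alpha> \<beta> q < 1" using exp_gt_zero[of "-\<beta>*q"] by linarith
qed

lemma h_iterates_tendsto_zero:
  fixes \<alpha> \<beta> p :: real
  assumes "0 \<le> \<alpha>" "\<alpha> < 1" "0 < \<beta>" "(1-\<alpha>)*\<beta> \<le> 1" "0 \<le> p"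
  shows "(\<lambda>k. (h \<alpha> \<beta> ^^ k) p) \<longlonglongrightarrow> 0"
proof (rule iterates_tendsto_zero[where F = "\<lambda>q. (1-\<alpha>)*(1 - exp (-\<beta>*q))"])
  fix q :: real
  show "0 \<le> q \<Longrightarrow> 0 \<le> h \<alpha> \<beta> q" using assms by (intro h_nonneg) auto
  show "0 \<le> q \<Longrightarrow> h \<alpha> \<beta> q \<le> (1-\<alpha>)*(1 - exp (-\<beta>*q))" using assms by (intro h_bounds) auto
  show "isCont (\<lambda>q. (1-\<alpha>)*(1 - exp (-\<beta>*q))) q" by (intro continuous_intros)
  assume "0 < q"
  then have "(1-\<alpha>)*(1 - exp (-\<beta>*q)) < (1-\<alpha>)*(\<beta>*q)"
    using assms one_minus_exp_neg_less[of "\<beta>*q"] by simp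
  also have "\<dots> \<le> q" using assms \<open>0 < q\<close> by (simp add: mult_left_le_one_le)
  finally show "(1-\<alpha>)*(1 - exp (-\<beta>*q)) < q" .
qed (use assms in simp)

lemma h_ge_min:
  fixes \<alpha> \<beta> :: real
  assumes "0 \<le> \<alpha>" "\<alpha> < 1" "0 < \<beta>" "1 < (1-\<alpha>)*\<beta>"
  obtains \<delta> where "0 < \<delta>" "\<And>q. 0 < q \<Longrightarrow> q < 1 \<Longrightarrow> min q \<delta> \<le> h \<alpha> \<beta> q"
proof -
  define L where "L q = (1-\<alpha>)*(1 - exp (-\<beta>*q))*exp (-\<beta>*q)^3" for q
  have "(L has_real_derivative (1-\<alpha>)*\<beta>) (at 0)"
    unfolding L_def by (rule derivative_eq_intros refl | simp)+
  moreover have "L 0 = 0" by (simp add: L_def)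
  ultimately obtain d where "0 < d" and below_d: "\<And>q. 0 < q \<Longrightarrow> q < d \<Longrightarrow> q < L q"
    using above_diagonal_near_zero assms(4) by blast
  define \<delta> where "\<delta> = (1-\<alpha>)*(1 - exp (-\<beta>*d))*exp (-\<beta>)^3"
  show ?thesis
  proof (rule that)
    show "0 < \<delta>" using assms \<open>0 < d\<close> by (simp add: \<delta>_def)
    fix q :: real
    assume "0 < q" "q < 1"
    have "L q \<le> h \<alpha> \<beta> q" using assms \<open>0 < q\<close> unfolding L_def by (intro h_bounds) auto
    moreover have "min q \<delta> \<le> L q"
    proof (cases "q < d")
      case True
      then show ?thesis using below_d \<open>0 < q\<close> by fastforce
    next
      case False
      have "1 - exp (-\<beta>*d) \<le> 1 - exp (-\<beta>*q)" using False assms by simp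
      moreover have "exp (-\<beta>)^3 \<le> exp (-\<beta>*q)^3" using \<open>q < 1\<close> assms by (intro power_mono) auto
      ultimately have "\<delta> \<le> L q"
        using assms \<open>0 < q\<close> unfolding \<delta>_def L_def by (auto intro!: mult_mono)
      then show ?thesis by simp
    qed
    ultimately show "min q \<delta> \<le> h \<alpha> \<beta> q" by linarith
  qed
qed

theorem mainTheorem7:
  fixes \<alpha> \<beta> :: real
  assumes "0 \<le> \<alpha>" and "\<alpha> < 1" and "\<beta> > 0"
  shows "((1 - \<alpha>) * \<beta> \<le> 1 \<longrightarrow>
            (\<forall>p\<in>{0..1}. (\<lambda>k. (h \<alpha> \<beta> ^^ k) p) \<longlonglongrightarrow> 0))
       \<and> ((1 - \<alpha>) * \<beta> > 1 \<longrightarrow>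
            (\<forall>p\<in>{0<..<1}. liminf (\<lambda>k. ereal ((h \<alpha> \<beta> ^^ k) p)) > 0))"
proof (intro conjI impI ballI)
  fix p :: real
  assume "(1 - \<alpha>) * \<beta> \<le> 1" "p \<in> {0..1}"
  then show "(\<lambda>k. (h \<alpha> \<beta> ^^ k) p) \<longlonglongrightarrow> 0"
    using assms by (intro h_iterates_tendsto_zero) auto
next
  fix p :: real
  assume "(1 - \<alpha>) * \<beta> > 1" "p \<in> {0<..<1}"
  then obtain \<delta> where "0 < \<delta>" "\<And>q. 0 < q \<Longrightarrow> q < 1 \<Longrightarrow> min q \<delta> \<le> h \<alpha> \<beta> q"
    using assms h_ge_min by blast
  with \<open>p \<in> {0<..<1}\<close> show "liminf (\<lambda>k. ereal ((h \<alpha> \<beta> ^^ k) p)) > 0"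
    using assms h_in_unit_interval by (intro liminf_iterates_pos[where S = "{0<..<1}"]) auto
qed

end
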